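(* Let $\mathbb A$ be an abelian category with enough projective objects. Let $(f_0,f_1):a\to b$ be a morphism in $\mathbb A^{[1]}_c$ and let $g:\mathrm{Ker}(a)\to\mathrm{Ker}(b)$ and $h:\mathrm{Coker}(a)\to\mathrm{Coker}(b)$ be the induced morphisms. Then $(f_0,f_1)$ is fully faithful in $\mathbb A^{[1]}_c$ if and only if $g$ is an isomorphism and $h$ is a monomorphism in $\mathbb A$.
   Context: Let $\mathbb A$ be an abelian category. The 2-category $\mathbb A^{[1]}$ has as objects the morphisms $a:A_1\to A_0$ of $\mathbb A$. For objects $a:A_1\to A_0$ and $b:B_1\to B_0$, a morphism $a\to b$ is a pair $(f_0,f_1)$ of morphisms $f_i:A_i\to B_i$ of $\mathbb A$ with $b f_1=f_0 a$; composition is componentwise. A 2-arrow $(f_0,f_1)\Rightarrow(g_0,g_1)$ between morphisms $a\to b$ is a morphism $\alpha:A_0\to B_1$ of $\mathbb A$ with $f_1-g_1=\alpha a$ and $f_0-g_0=b\alpha$; vertical composition is addition of such $\alpha$'s, and whiskering is given by $(h_0,h_1)\circ\alpha=h_1\alpha$ and $\alpha\circ(e_0,e_1)=\alpha e_0$. All 2-arrows are invertible, so each $\mathbf{Hom}(a,b)$ is a groupoid. $\mathbb A^{[1]}_c$ is the full 2-subcategory of $\mathbb A^{[1]}$ on the objects $a:A_1\to A_0$ with $A_0$ projective in $\mathbb A$. A morphism $(f_0,f_1):a\to b$ induces $g:\mathrm{Ker}(a)\to\mathrm{Ker}(b)$ (restriction of $f_1$) and $h:\mathrm{Coker}(a)\to\mathrm{Coker}(b)$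 (induced by $f_0$). A morphism $f:a\to b$ of $\mathbb A^{[1]}_c$ is fully faithful in $\mathbb A^{[1]}_c$ if for every object $x$ of $\mathbb A^{[1]}_c$ the functor $f\circ-:\mathbf{Hom}(x,a)\to\mathbf{Hom}(x,b)$ is full and faithful. *)

theory Defs
  imports Main
begin

text \<open>A category is given by a set of objects, hom-sets, composition
  (cmp C g f = g after f), identities, and the additive structure
  (addition, negation and zero morphisms) used in a preadditive category.\<close>

record ('o, 'm) cat_data =
  obj  :: "'o set"
  hom  :: "'o \<Rightarrow> 'o \<Rightarrow> 'm set"
  cmp  :: "'m \<Rightarrow> 'm \<Rightarrow> 'm"
  idm  :: "'o \<Rightarrow> 'm"
  plus :: "'m \<Rightarrow> 'm \<Rightarrow> 'm"
  neg  :: "'m \<Rightarrow> 'm"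
  zer  :: "'o \<Rightarrow> 'o \<Rightarrow> 'm"

definition minus :: "('o, 'm) cat_data \<Rightarrow> 'm \<Rightarrow> 'm \<Rightarrow> 'm" where
  "minus C f g = plus C f (neg C g)"

definition category :: "('o, 'm) cat_data \<Rightarrow> bool" where
  "category C \<longleftrightarrow>
     (\<forall>a b. hom C a b \<noteq> {} \<longrightarrow> a \<in> obj C \<and> b \<in> obj C) \<and>
     (\<forall>a b a' b' f. f \<in> hom C a b \<and> f \<in> hom C a' b' \<longrightarrow> a = a' \<and> b = b') \<and>
     (\<forall>a\<in>obj C. idm C a \<in> hom C a a) \<and>
     (\<forall>a b. \<forall>f\<in>hom C a b. cmp C (idm C b) f = f \<and> cmp C f (idm C a) = f) \<and>
     (\<forall>a b c. \<forall>f\<in>hom C a b. \<forall>g\<in>hom C b c. cmp C g f \<in> hom C a c) \<and>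
     (\<forall>a b c d. \<forall>f\<in>hom C a b. \<forall>g\<in>hom C b c. \<forall>h\<in>hom C c d.
        cmp C h (cmp C g f) = cmp C (cmp C h g) f)"

definition preadditive :: "('o, 'm) cat_data \<Rightarrow> bool" where
  "preadditive C \<longleftrightarrow> category C \<and>
     (\<forall>a\<in>obj C. \<forall>b\<in>obj C.
        zer C a b \<in> hom C a b \<and>
        (\<forall>f\<in>hom C a b. \<forall>g\<in>hom C a b. plus C f g \<in> hom C a b) \<and>
        (\<forall>f\<in>hom C a b. neg C f \<in> hom C a b) \<and>
        (\<forall>f\<in>hom C a b. \<forall>g\<in>hom C a b. \<forall>h\<in>hom C a b.
           plus C (plus C f g) h = plus C f (plus C g h)) \<and>
        (\<forall>f\<in>hom C a b. \<forall>g\<in>hom C a b. plus C f g = plus C g f) \<and>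
        (\<forall>f\<in>hom C a b. plus C f (zer C a b) = f) \<and>
        (\<forall>f\<in>hom C a b. plus C f (neg C f) = zer C a b)) \<and>
     (\<forall>a b c. \<forall>f\<in>hom C a b. \<forall>g\<in>hom C b c. \<forall>g'\<in>hom C b c.
        cmp C (plus C g g') f = plus C (cmp C g f) (cmp C g' f)) \<and>
     (\<forall>a b c. \<forall>f\<in>hom C a b. \<forall>f'\<in>hom C a b. \<forall>g\<in>hom C b c.
        cmp C g (plus C f f') = plus C (cmp C g f) (cmp C g f'))"

definition zero_object :: "('o, 'm) cat_data \<Rightarrow> 'o \<Rightarrow> bool" where
  "zero_object C z \<longleftrightarrow> z \<in> obj C \<and>
     (\<forall>x\<in>obj C. hom C z x = {zer C z x} \<and> hom C x z = {zer C x z})"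

definition has_biproducts :: "('o, 'm) cat_data \<Rightarrow> bool" where
  "has_biproducts C \<longleftrightarrow>
     (\<forall>A\<in>obj C. \<forall>B\<in>obj C. \<exists>S\<in>obj C.
        \<exists>i1\<in>hom C A S. \<exists>i2\<in>hom C B S. \<exists>p1\<in>hom C S A. \<exists>p2\<in>hom C S B.
          cmp C p1 i1 = idm C A \<and> cmp C p2 i2 = idm C B \<and>
          cmp C p1 i2 = zer C B A \<and> cmp C p2 i1 = zer C A B \<and>
          plus C (cmp C i1 p1) (cmp C i2 p2) = idm C S)"

definition is_kernel :: "('o, 'm) cat_data \<Rightarrow> 'o \<Rightarrow> 'o \<Rightarrow> 'm \<Rightarrow> 'o \<Rightarrow> 'm \<Rightarrow> bool" where
  "is_kernel C A B f K k \<longleftrightarrow> f \<in> hom C A B \<and> K \<in> obj C \<and> k \<in> hom C K A \<and>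
     cmp C f k = zer C K B \<and>
     (\<forall>X\<in>obj C. \<forall>u\<in>hom C X A. cmp C f u = zer C X B \<longrightarrow>
        (\<exists>!v. v \<in> hom C X K \<and> cmp C k v = u))"

definition is_cokernel :: "('o, 'm) cat_data \<Rightarrow> 'o \<Rightarrow> 'o \<Rightarrow> 'm \<Rightarrow> 'o \<Rightarrow> 'm \<Rightarrow> bool" where
  "is_cokernel C A B f Q q \<longleftrightarrow> f \<in> hom C A B \<and> Q \<in> obj C \<and> q \<in> hom C B Q \<and>
     cmp C q f = zer C A Q \<and>
     (\<forall>X\<in>obj C. \<forall>u\<in>hom C B X. cmp C u f = zer C A X \<longrightarrow>
        (\<exists>!v. v \<in> hom C Q X \<and> cmp C v q = u))"

definition is_mono :: "('o, 'm) cat_data \<Rightarrow> 'o \<Rightarrow> 'o \<Rightarrow> 'm \<Rightarrow> bool" where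
  "is_mono C A B f \<longleftrightarrow> f \<in> hom C A B \<and>
     (\<forall>X\<in>obj C. \<forall>u\<in>hom C X A. \<forall>v\<in>hom C X A. cmp C f u = cmp C f v \<longrightarrow> u = v)"

definition is_epi :: "('o, 'm) cat_data \<Rightarrow> 'o \<Rightarrow> 'o \<Rightarrow> 'm \<Rightarrow> bool" where
  "is_epi C A B f \<longleftrightarrow> f \<in> hom C A B \<and>
     (\<forall>X\<in>obj C. \<forall>u\<in>hom C B X. \<forall>v\<in>hom C B X. cmp C u f = cmp C v f \<longrightarrow> u = v)"

definition is_iso :: "('o, 'm) cat_data \<Rightarrow> 'o \<Rightarrow> 'o \<Rightarrow> 'm \<Rightarrow> bool" where
  "is_iso C A B f \<longleftrightarrow> f \<in> hom C A B \<and>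
     (\<exists>g\<in>hom C B A. cmp C g f = idm C A \<and> cmp C f g = idm C B)"

definition abelian :: "('o, 'm) cat_data \<Rightarrow> bool" where
  "abelian C \<longleftrightarrow> preadditive C \<and> (\<exists>z. zero_object C z) \<and> has_biproducts C \<and>
     (\<forall>A\<in>obj C. \<forall>B\<in>obj C. \<forall>f\<in>hom C A B.
        (\<exists>K k. is_kernel C A B f K k) \<and> (\<exists>Q q. is_cokernel C A B f Q q)) \<and>
     (\<forall>A B f. is_mono C A B f \<longrightarrow> (\<exists>Z g. is_kernel C B Z g A f)) \<and>
     (\<forall>A B f. is_epi C A B f \<longrightarrow> (\<exists>Z g. is_cokernel C Z A g B f))"

definition projective :: "('o, 'm) cat_data \<Rightarrow> 'o \<Rightarrow> bool" where
  "projective C P \<longleftrightarrow> P \<in> obj C \<and>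
     (\<forall>X Y e u. is_epi C X Y e \<longrightarrow> u \<in> hom C P Y \<longrightarrow> (\<exists>v\<in>hom C P X. cmp C e v = u))"

definition enough_projectives :: "('o, 'm) cat_data \<Rightarrow> bool" where
  "enough_projectives C \<longleftrightarrow>
     (\<forall>X\<in>obj C. \<exists>P e. projective C P \<and> is_epi C P X e)"

text \<open>An object of A^[1] is a triple (A1, A0, a) with a : A1 \<rightarrow> A0.
  A morphism is a pair (f0, f1).\<close>

definition arr_obj :: "('o, 'm) cat_data \<Rightarrow> 'o \<times> 'o \<times> 'm \<Rightarrow> bool" where
  "arr_obj C x = (case x of (X1, X0, xm) \<Rightarrow> xm \<in> hom C X1 X0)"

definition arr_obj_c :: "('o, 'm) cat_data \<Rightarrow> 'o \<times> 'o \<times> 'm \<Rightarrow> bool" where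
  "arr_obj_c C x = (arr_obj C x \<and> projective C (fst (snd x)))"

definition arr_mor :: "('o, 'm) cat_data \<Rightarrow> 'o \<times> 'o \<times> 'm \<Rightarrow> 'o \<times> 'o \<times> 'm \<Rightarrow> 'm \<times> 'm \<Rightarrow> bool" where
  "arr_mor C x y f = (case x of (A1, A0, a) \<Rightarrow> case y of (B1, B0, b) \<Rightarrow> case f of (f0, f1) \<Rightarrow>
     f0 \<in> hom C A0 B0 \<and> f1 \<in> hom C A1 B1 \<and> cmp C b f1 = cmp C f0 a)"

definition arr_comp :: "('o, 'm) cat_data \<Rightarrow> 'm \<times> 'm \<Rightarrow> 'm \<times> 'm \<Rightarrow> 'm \<times> 'm" where
  "arr_comp C g f = (cmp C (fst g) (fst f), cmp C (snd g) (snd f))"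

definition two_arrow :: "('o, 'm) cat_data \<Rightarrow> 'o \<times> 'o \<times> 'm \<Rightarrow> 'o \<times> 'o \<times> 'm \<Rightarrow>
    'm \<times> 'm \<Rightarrow> 'm \<times> 'm \<Rightarrow> 'm \<Rightarrow> bool" where
  "two_arrow C x y f g \<alpha> = (case x of (A1, A0, a) \<Rightarrow> case y of (B1, B0, b) \<Rightarrow>
     \<alpha> \<in> hom C A0 B1 \<and>
     minus C (snd f) (snd g) = cmp C \<alpha> a \<and>
     minus C (fst f) (fst g) = cmp C b \<alpha>)"

definition whisker_left :: "('o, 'm) cat_data \<Rightarrow> 'm \<times> 'm \<Rightarrow> 'm \<Rightarrow> 'm" where
  "whisker_left C h \<alpha> = cmp C (snd h) \<alpha>"

text \<open>f : a \<rightarrow> b is fully faithful in A^[1]_c: for every object x of A^[1]_c the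
  functor f \<circ> - : Hom(x,a) \<rightarrow> Hom(x,b) is full and faithful.\<close>
definition fully_faithful_c :: "('o, 'm) cat_data \<Rightarrow> 'o \<times> 'o \<times> 'm \<Rightarrow> 'o \<times> 'o \<times> 'm \<Rightarrow>
    'm \<times> 'm \<Rightarrow> bool" where
  "fully_faithful_c C a b f \<longleftrightarrow>
     (\<forall>x. arr_obj_c C x \<longrightarrow>
       (\<forall>e e'. arr_mor C x a e \<longrightarrow> arr_mor C x a e' \<longrightarrow>
          (\<forall>\<beta>. two_arrow C x b (arr_comp C f e) (arr_comp C f e') \<beta> \<longrightarrow>
             (\<exists>\<alpha>. two_arrow C x a e e' \<alpha> \<and> whisker_left C f \<alpha> = \<beta>)) \<and>
          (\<forall>\<alpha> \<alpha>'. two_arrow C x a e e' \<alpha> \<longrightarrow> two_arrow C x a e e' \<alpha>' \<longrightarrow>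
             whisker_left C f \<alpha> = whisker_left C f \<alpha>' \<longrightarrow> \<alpha> = \<alpha>')))"

end

theory Submission
  imports Defs
begin

text \<open>
  Probing the definition of full faithfulness with the test objects 0 : P \<rightarrow> P, P projective,
  shows that it amounts to two conditions on maps out of projectives:
  \<^item> faithfulness at P: a map d : P \<rightarrow> A1 with a d = 0 and f1 d = 0 vanishes;
  \<^item> fullness at P: whenever f0 s = b t for s : P \<rightarrow> A0 and t : P \<rightarrow> B1, there is
    r : P \<rightarrow> A1 with a r = s and f1 r = t.
  Conversely these conditions give back full faithfulness, because a covering of an arbitrary
  object by a projective propagates faithfulness from projectives to all objects
  (lemma fully_faithful_c_iff_tests).

  Then, with g : Ker a \<rightarrow> Ker b and h : Coker a \<rightarrow> Coker b the induced maps, faithfulness at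
  all objects is exactly g being mono, fullness at all projectives implies that g is epi and
  h is mono, and g iso together with h mono gives fullness back.  As mono and epi maps in an
  abelian category are isomorphisms, the theorem follows.
\<close>

locale preadd =
  fixes C :: "('o, 'm) cat_data"
  assumes preadditive: "preadditive C"
begin

lemma category: "category C"
  using preadditive unfolding preadditive_def by blast

lemma hom_obj: "f \<in> hom C a b \<Longrightarrow> a \<in> obj C \<and> b \<in> obj C"
proof -
  assume "f \<in> hom C a b"
  then have "hom C a b \<noteq> {}" by blast
  then show ?thesis using category unfolding category_def by meson
qed

lemma idm_hom: "a \<in> obj C \<Longrightarrow> idm C a \<in> hom C a a"
  using category unfolding category_def by blast
lemma idl: "f \<in> hom C a b \<Longrightarrow> cmp C (idm C b) f = f"
  using category unfolding category_def by blast
lemma idr: "f \<in> hom C a b \<Longrightarrow> cmp C f (idm C a) = f"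
  using category unfolding category_def by blast
lemma comp: "f \<in> hom C a b \<Longrightarrow> g \<in> hom C b c \<Longrightarrow> cmp C g f \<in> hom C a c"
  using category unfolding category_def by blast
lemma assoc: "f \<in> hom C a b \<Longrightarrow> g \<in> hom C b c \<Longrightarrow> h \<in> hom C c d \<Longrightarrow>
    cmp C h (cmp C g f) = cmp C (cmp C h g) f"
  using category unfolding category_def by blast

lemma hom_abelian_group:
  assumes "a \<in> obj C" "b \<in> obj C"
  shows "zer C a b \<in> hom C a b \<and>
    (\<forall>f\<in>hom C a b. \<forall>g\<in>hom C a b. plus C f g \<in> hom C a b) \<and>
    (\<forall>f\<in>hom C a b. neg C f \<in> hom C a b) \<and>
    (\<forall>f\<in>hom C a b. \<forall>g\<in>hom C a b. \<forall>h\<in>hom C a b.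
       plus C (plus C f g) h = plus C f (plus C g h)) \<and>
    (\<forall>f\<in>hom C a b. \<forall>g\<in>hom C a b. plus C f g = plus C g f) \<and>
    (\<forall>f\<in>hom C a b. plus C f (zer C a b) = f) \<and>
    (\<forall>f\<in>hom C a b. plus C f (neg C f) = zer C a b)"
  using preadditive assms unfolding preadditive_def by meson

lemma zer_hom: "a \<in> obj C \<Longrightarrow> b \<in> obj C \<Longrightarrow> zer C a b \<in> hom C a b"
  using hom_abelian_group by blast
lemma zer_hom': "f \<in> hom C a b \<Longrightarrow> zer C a b \<in> hom C a b"
  using zer_hom hom_obj by blast
lemma plus_hom: "f \<in> hom C a b \<Longrightarrow> g \<in> hom C a b \<Longrightarrow> plus C f g \<in> hom C a b"
  using hom_abelian_group hom_obj by meson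
lemma neg_hom: "f \<in> hom C a b \<Longrightarrow> neg C f \<in> hom C a b"
  using hom_abelian_group hom_obj by meson
lemma add_assoc: "f \<in> hom C a b \<Longrightarrow> g \<in> hom C a b \<Longrightarrow> h \<in> hom C a b \<Longrightarrow>
    plus C (plus C f g) h = plus C f (plus C g h)"
  using hom_abelian_group hom_obj by meson
lemma add_comm: "f \<in> hom C a b \<Longrightarrow> g \<in> hom C a b \<Longrightarrow> plus C f g = plus C g f"
  using hom_abelian_group hom_obj by meson
lemma add_zero: "f \<in> hom C a b \<Longrightarrow> plus C f (zer C a b) = f"
  using hom_abelian_group hom_obj by meson
lemma add_neg: "f \<in> hom C a b \<Longrightarrow> plus C f (neg C f) = zer C a b"
  using hom_abelian_group hom_obj by meson
lemma distl: "f \<in> hom C a b \<Longrightarrow> g \<in> hom C b c \<Longrightarrow> g' \<in> hom C b c \<Longrightarrow>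
    cmp C (plus C g g') f = plus C (cmp C g f) (cmp C g' f)"
  using preadditive unfolding preadditive_def by blast
lemma distr: "f \<in> hom C a b \<Longrightarrow> f' \<in> hom C a b \<Longrightarrow> g \<in> hom C b c \<Longrightarrow>
    cmp C g (plus C f f') = plus C (cmp C g f) (cmp C g f')"
  using preadditive unfolding preadditive_def by blast

lemma zero_add: "f \<in> hom C a b \<Longrightarrow> plus C (zer C a b) f = f"
  by (metis add_comm add_zero zer_hom')

lemma add_left_cancel:
  assumes x: "x \<in> hom C a b" and "y \<in> hom C a b" "z \<in> hom C a b"
    and eq: "plus C x y = plus C x z"
  shows "y = z"
proof -
  have n: "neg C x \<in> hom C a b" using x neg_hom by blast
  have nx: "plus C (neg C x) x = zer C a b" using add_comm[OF n x] add_neg[OF x] by simp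
  have "plus C (plus C (neg C x) x) y = plus C (plus C (neg C x) x) z"
    using eq add_assoc[OF n x] assms by simp
  then show ?thesis using nx zero_add assms by simp
qed

lemma neg_unique: "x \<in> hom C a b \<Longrightarrow> y \<in> hom C a b \<Longrightarrow> plus C x y = zer C a b \<Longrightarrow> y = neg C x"
  by (metis add_neg add_left_cancel neg_hom)

lemma neg_neg: "x \<in> hom C a b \<Longrightarrow> neg C (neg C x) = x"
  by (metis add_comm add_neg neg_hom neg_unique)

lemma minus_hom: "x \<in> hom C a b \<Longrightarrow> y \<in> hom C a b \<Longrightarrow> minus C x y \<in> hom C a b"
  unfolding minus_def by (simp add: neg_hom plus_hom)

lemma minus_self: "x \<in> hom C a b \<Longrightarrow> minus C x x = zer C a b"
  unfolding minus_def by (simp add: add_neg)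

lemma minus_zero: "x \<in> hom C a b \<Longrightarrow> minus C x (zer C a b) = x"
  unfolding minus_def by (metis add_zero neg_unique zer_hom')

lemma minus_eq_zero:
  assumes "x \<in> hom C a b" "y \<in> hom C a b" "minus C x y = zer C a b"
  shows "x = y"
proof -
  have "neg C y = neg C x" using assms unfolding minus_def by (metis neg_hom neg_unique)
  then show ?thesis by (metis assms(1,2) neg_neg)
qed

lemma plus_minus: "x \<in> hom C a b \<Longrightarrow> y \<in> hom C a b \<Longrightarrow> plus C (minus C x y) y = x"
  unfolding minus_def by (metis add_assoc add_comm add_neg add_zero neg_hom)

lemma comp_zer_r:
  assumes g: "g \<in> hom C b c" and X: "a \<in> obj C"
  shows "cmp C g (zer C a b) = zer C a c"
proof -
  have z: "zer C a b \<in> hom C a b" using assms hom_obj zer_hom by blast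
  have gz: "cmp C g (zer C a b) \<in> hom C a c" using comp z g by blast
  have "plus C (cmp C g (zer C a b)) (zer C a c) = cmp C g (plus C (zer C a b) (zer C a b))"
    using add_zero z gz by simp
  also have "\<dots> = plus C (cmp C g (zer C a b)) (cmp C g (zer C a b))" using distr z g by blast
  finally show ?thesis using add_left_cancel gz zer_hom' by metis
qed

lemma comp_zer_l:
  assumes f: "f \<in> hom C a b" and X: "c \<in> obj C"
  shows "cmp C (zer C b c) f = zer C a c"
proof -
  have z: "zer C b c \<in> hom C b c" using assms hom_obj zer_hom by blast
  have zf: "cmp C (zer C b c) f \<in> hom C a c" using comp z f by blast
  have "plus C (cmp C (zer C b c) f) (zer C a c) = cmp C (plus C (zer C b c) (zer C b c)) f"
    using add_zero z zf by simp
  also have "\<dots> = plus C (cmp C (zer C b c) f) (cmp C (zer C b c) f)" using distl z f by blast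
  finally show ?thesis using add_left_cancel zf zer_hom' by metis
qed

lemma comp_neg_r:
  assumes "f \<in> hom C a b" "g \<in> hom C b c"
  shows "cmp C g (neg C f) = neg C (cmp C g f)"
proof -
  have "plus C (cmp C g f) (cmp C g (neg C f)) = cmp C g (plus C f (neg C f))"
    using distr assms neg_hom by metis
  also have "\<dots> = zer C a c" using add_neg assms comp_zer_r hom_obj by metis
  finally show ?thesis using neg_unique comp assms neg_hom by metis
qed

lemma comp_neg_l:
  assumes "f \<in> hom C a b" "g \<in> hom C b c"
  shows "cmp C (neg C g) f = neg C (cmp C g f)"
proof -
  have "plus C (cmp C g f) (cmp C (neg C g) f) = cmp C (plus C g (neg C g)) f"
    using distl assms neg_hom by metis
  also have "\<dots> = zer C a c" using add_neg assms comp_zer_l hom_obj by metis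
  finally show ?thesis using neg_unique comp assms neg_hom by metis
qed

lemma comp_minus_r: "f \<in> hom C a b \<Longrightarrow> f' \<in> hom C a b \<Longrightarrow> g \<in> hom C b c \<Longrightarrow>
    cmp C g (minus C f f') = minus C (cmp C g f) (cmp C g f')"
  unfolding minus_def by (metis comp_neg_r distr neg_hom)

lemma comp_minus_l: "f \<in> hom C a b \<Longrightarrow> g \<in> hom C b c \<Longrightarrow> g' \<in> hom C b c \<Longrightarrow>
    cmp C (minus C g g') f = minus C (cmp C g f) (cmp C g' f)"
  unfolding minus_def by (metis comp_neg_l distl neg_hom)

lemma monoD: "is_mono C A B f \<Longrightarrow> u \<in> hom C X A \<Longrightarrow> v \<in> hom C X A \<Longrightarrow>
    cmp C f u = cmp C f v \<Longrightarrow> u = v"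
  unfolding is_mono_def using hom_obj by blast
lemma mono_hom: "is_mono C A B f \<Longrightarrow> f \<in> hom C A B"
  unfolding is_mono_def by blast
lemma epiD: "is_epi C A B f \<Longrightarrow> u \<in> hom C B X \<Longrightarrow> v \<in> hom C B X \<Longrightarrow>
    cmp C u f = cmp C v f \<Longrightarrow> u = v"
  unfolding is_epi_def using hom_obj by blast
lemma epi_hom: "is_epi C A B f \<Longrightarrow> f \<in> hom C A B"
  unfolding is_epi_def by blast

lemma mono_zeroI:
  assumes f: "f \<in> hom C A B"
    and zero: "\<And>X u. X \<in> obj C \<Longrightarrow> u \<in> hom C X A \<Longrightarrow> cmp C f u = zer C X B \<Longrightarrow> u = zer C X A"
  shows "is_mono C A B f"
  unfolding is_mono_def
proof (intro conjI f ballI impI)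
  fix X u v assume X: "X \<in> obj C" and u: "u \<in> hom C X A" and v: "v \<in> hom C X A"
    and e: "cmp C f u = cmp C f v"
  have "cmp C f (minus C u v) = zer C X B"
    using comp_minus_r[OF u v f] e minus_self comp[OF v f] by simp
  then have "minus C u v = zer C X A" using zero X minus_hom u v by blast
  then show "u = v" using minus_eq_zero u v by blast
qed

lemma mono_zeroD:
  assumes m: "is_mono C A B f" and u: "u \<in> hom C X A" and fu: "cmp C f u = zer C X B"
  shows "u = zer C X A"
proof -
  have "cmp C f (zer C X A) = zer C X B" using comp_zer_r mono_hom[OF m] hom_obj[OF u] by blast
  then show ?thesis using monoD[OF m u zer_hom'[OF u]] fu by simp
qed

lemma epi_zeroI:
  assumes f: "f \<in> hom C A B"
    and zero: "\<And>X u. X \<in> obj C \<Longrightarrow> u \<in> hom C B X \<Longrightarrow> cmp C u f = zer C A X \<Longrightarrow> u = zer C B X"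
  shows "is_epi C A B f"
  unfolding is_epi_def
proof (intro conjI f ballI impI)
  fix X u v assume X: "X \<in> obj C" and u: "u \<in> hom C B X" and v: "v \<in> hom C B X"
    and e: "cmp C u f = cmp C v f"
  have "cmp C (minus C u v) f = zer C A X"
    using comp_minus_l[OF f u v] e minus_self comp[OF f v] by simp
  then have "minus C u v = zer C B X" using zero X minus_hom u v by blast
  then show "u = v" using minus_eq_zero u v by blast
qed

lemma epi_zeroD:
  assumes e: "is_epi C A B f" and u: "u \<in> hom C B X" and uf: "cmp C u f = zer C A X"
  shows "u = zer C B X"
proof -
  have "cmp C (zer C B X) f = zer C A X" using comp_zer_l epi_hom[OF e] hom_obj[OF u] by blast
  then show ?thesis using epiD[OF e u zer_hom'[OF u]] uf by simp
qed

lemma kernelD: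
  assumes "is_kernel C A B f K k"
  shows "f \<in> hom C A B" "k \<in> hom C K A" "cmp C f k = zer C K B"
  using assms unfolding is_kernel_def by auto

lemma kernel_unique_lift:
  assumes ker: "is_kernel C A B f K k" and u: "u \<in> hom C X A" and fu: "cmp C f u = zer C X B"
  shows "\<exists>!v. v \<in> hom C X K \<and> cmp C k v = u"
  using ker hom_obj[OF u] u fu unfolding is_kernel_def by blast

lemma kernel_lift:
  "is_kernel C A B f K k \<Longrightarrow> u \<in> hom C X A \<Longrightarrow> cmp C f u = zer C X B \<Longrightarrow>
    \<exists>v \<in> hom C X K. cmp C k v = u"
  using kernel_unique_lift by blast

lemma cokernelD:
  assumes "is_cokernel C A B f Q q"
  shows "f \<in> hom C A B" "q \<in> hom C B Q" "cmp C q f = zer C A Q"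
  using assms unfolding is_cokernel_def by auto

lemma cokernel_unique_desc:
  assumes cok: "is_cokernel C A B f Q q" and u: "u \<in> hom C B X" and uf: "cmp C u f = zer C A X"
  shows "\<exists>!v. v \<in> hom C Q X \<and> cmp C v q = u"
  using cok hom_obj[OF u] u uf unfolding is_cokernel_def by blast

lemma cokernel_desc:
  "is_cokernel C A B f Q q \<Longrightarrow> u \<in> hom C B X \<Longrightarrow> cmp C u f = zer C A X \<Longrightarrow>
    \<exists>v \<in> hom C Q X. cmp C v q = u"
  using cokernel_unique_desc by blast

text \<open>The zero map factors through the kernel only as zero: kernels are monomorphisms.\<close>
lemma kernel_mono:
  assumes ker: "is_kernel C A B f K k"
  shows "is_mono C K A k"
proof (rule mono_zeroI)
  show k: "k \<in> hom C K A" using kernelD[OF ker] by blast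
  fix X u assume X: "X \<in> obj C" and u: "u \<in> hom C X K" and ku: "cmp C k u = zer C X A"
  have z: "zer C X A \<in> hom C X A" using zer_hom' comp[OF u k] ku by metis
  have "cmp C f (zer C X A) = zer C X B" using comp_zer_r kernelD(1)[OF ker] X by blast
  then have "\<exists>!v. v \<in> hom C X K \<and> cmp C k v = zer C X A" using kernel_unique_lift[OF ker z] by blast
  moreover have "cmp C k (zer C X K) = zer C X A" using comp_zer_r[OF k X] .
  ultimately show "u = zer C X K" using u ku zer_hom'[OF u] by blast
qed

lemma cokernel_epi:
  assumes cok: "is_cokernel C A B f Q q"
  shows "is_epi C B Q q"
proof (rule epi_zeroI)
  show q: "q \<in> hom C B Q" using cokernelD[OF cok] by blast
  fix X u assume X: "X \<in> obj C" and u: "u \<in> hom C Q X" and uq: "cmp C u q = zer C B X"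
  have z: "zer C B X \<in> hom C B X" using zer_hom' comp[OF q u] uq by metis
  have "cmp C (zer C B X) f = zer C A X" using comp_zer_l cokernelD(1)[OF cok] X by blast
  then have "\<exists>!v. v \<in> hom C Q X \<and> cmp C v q = zer C B X" using cokernel_unique_desc[OF cok z] by blast
  moreover have "cmp C (zer C Q X) q = zer C B X" using comp_zer_l[OF q X] .
  ultimately show "u = zer C Q X" using u uq zer_hom'[OF u] by blast
qed

lemma mono_comp:
  assumes m: "is_mono C A B m" and n: "is_mono C B D n"
  shows "is_mono C A D (cmp C n m)"
proof (rule mono_zeroI)
  show "cmp C n m \<in> hom C A D" using comp mono_hom m n by blast
  fix X u assume u: "u \<in> hom C X A" and z: "cmp C (cmp C n m) u = zer C X D"
  have "cmp C n (cmp C m u) = zer C X D" using z assoc[OF u mono_hom[OF m] mono_hom[OF n]] by simp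
  then have "cmp C m u = zer C X B" using mono_zeroD[OF n] comp u mono_hom[OF m] by blast
  then show "u = zer C X A" using mono_zeroD[OF m u] by blast
qed

lemma iso_mono:
  assumes iso: "is_iso C A B f"
  shows "is_mono C A B f"
proof -
  obtain f' where f: "f \<in> hom C A B" and f': "f' \<in> hom C B A" and inv: "cmp C f' f = idm C A"
    using iso unfolding is_iso_def by blast
  show ?thesis
  proof (rule mono_zeroI[OF f])
    fix X u assume X: "X \<in> obj C" and u: "u \<in> hom C X A" and fu: "cmp C f u = zer C X B"
    have "u = cmp C (cmp C f' f) u" using inv idl[OF u] by simp
    also have "\<dots> = cmp C f' (zer C X B)" using assoc[OF u f f'] fu by simp
    also have "\<dots> = zer C X A" using comp_zer_r[OF f' X] .
    finally show "u = zer C X A" .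
  qed
qed

end

locale abel = preadd +
  assumes abelian: "abelian C"
begin

lemma has_kernel:
  assumes "f \<in> hom C A B"
  shows "\<exists>K k. is_kernel C A B f K k"
  using abelian assms hom_obj[OF assms] unfolding abelian_def by meson

lemma mono_is_kernel: "is_mono C A B f \<Longrightarrow> \<exists>Z g. is_kernel C B Z g A f"
  using abelian unfolding abelian_def by meson

lemma epi_is_cokernel: "is_epi C A B f \<Longrightarrow> \<exists>Z g. is_cokernel C Z A g B f"
  using abelian unfolding abelian_def by meson

text \<open>If m : I \<rightarrow> B is the kernel of the cokernel q of f, then f factors as f = m f' with f'
  epi: this is the image factorization of f.\<close>
lemma image_factor_epi:
  assumes cok: "is_cokernel C A B f Q q" and ker: "is_kernel C B Q q I m"
    and f': "f' \<in> hom C A I" and mf: "cmp C m f' = f"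
  shows "is_epi C A I f'"
proof (rule epi_zeroI[OF f'])
  have q: "q \<in> hom C B Q" using cokernelD[OF cok] by blast
  have m: "m \<in> hom C I B" and qm: "cmp C q m = zer C I Q" using kernelD[OF ker] by auto
  have m_mono: "is_mono C I B m" using kernel_mono[OF ker] .
  fix Y u assume Y: "Y \<in> obj C" and u: "u \<in> hom C I Y" and uf: "cmp C u f' = zer C A Y"
  txt \<open>Let n : N \<rightarrow> I be the kernel of u; it suffices to show that n is split epi.\<close>
  obtain N n where kn: "is_kernel C I Y u N n" using has_kernel[OF u] by blast
  have n: "n \<in> hom C N I" and un: "cmp C u n = zer C N Y" using kernelD[OF kn] by auto
  obtain e where e: "e \<in> hom C A N" and ne: "cmp C n e = f'" using kernel_lift[OF kn f' uf] by blast
  txt \<open>The mono m n is the kernel of some z; then z kills f, so z factors through q, so z kills m,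
    and m factors through m n.\<close>
  obtain Z z where kz: "is_kernel C B Z z N (cmp C m n)"
    using mono_is_kernel[OF mono_comp[OF kernel_mono[OF kn] m_mono]] by blast
  have z: "z \<in> hom C B Z" and zmn: "cmp C z (cmp C m n) = zer C N Z" using kernelD[OF kz] by auto
  have "cmp C z f = cmp C z (cmp C (cmp C m n) e)" using mf ne assoc[OF e n m] by simp
  also have "\<dots> = zer C A Z" using assoc[OF e comp[OF n m] z] zmn comp_zer_l[OF e] hom_obj[OF z] by simp
  finally obtain z' where z': "z' \<in> hom C Q Z" and zq: "cmp C z' q = z"
    using cokernel_desc[OF cok z] by blast
  have "cmp C z m = zer C I Z" using zq assoc[OF m q z'] qm comp_zer_r[OF z'] hom_obj[OF m] by simp
  then obtain r where r: "r \<in> hom C I N" and mnr: "cmp C (cmp C m n) r = m"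
    using kernel_lift[OF kz m] by blast
  have nr: "cmp C n r = idm C I"
    using monoD[OF m_mono comp[OF r n] idm_hom] mnr assoc[OF r n m] idr[OF m] hom_obj[OF m] by simp
  have "u = cmp C u (cmp C n r)" using nr idr[OF u] by simp
  also have "\<dots> = zer C I Y" using assoc[OF r n u] un comp_zer_l[OF r Y] by simp
  finally show "u = zer C I Y" .
qed

lemma image_lift:
  assumes cok: "is_cokernel C A B f Q q" and P: "projective C P"
    and s: "s \<in> hom C P B" and qs: "cmp C q s = zer C P Q"
  shows "\<exists>t \<in> hom C P A. cmp C f t = s"
proof -
  have f: "f \<in> hom C A B" and q: "q \<in> hom C B Q" and qf: "cmp C q f = zer C A Q"
    using cokernelD[OF cok] by auto
  obtain I m where ker: "is_kernel C B Q q I m" using has_kernel[OF q] by blast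
  have m: "m \<in> hom C I B" using kernelD[OF ker] by blast
  obtain f' where f': "f' \<in> hom C A I" and mf: "cmp C m f' = f" using kernel_lift[OF ker f qf] by blast
  obtain s' where s': "s' \<in> hom C P I" and ms: "cmp C m s' = s" using kernel_lift[OF ker s qs] by blast
  obtain t where t: "t \<in> hom C P A" and ft: "cmp C f' t = s'"
    using P image_factor_epi[OF cok ker f' mf] s' unfolding projective_def by blast
  have "cmp C f t = s" using mf ft ms assoc[OF t f' m] by simp
  then show ?thesis using t by blast
qed

lemma mono_epi_iso:
  assumes mono: "is_mono C A B f" and epi: "is_epi C A B f"
  shows "is_iso C A B f"
proof -
  have f: "f \<in> hom C A B" using mono_hom[OF mono] .
  obtain Z z where cz: "is_cokernel C Z A z B f" using epi_is_cokernel[OF epi] by blast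
  have z: "z \<in> hom C Z A" and fz: "cmp C f z = zer C Z B" using cokernelD[OF cz] by auto
  have "cmp C (idm C A) z = zer C Z A"
    using idl[OF z] mono_zeroD[OF mono z fz] by simp
  then obtain v where v: "v \<in> hom C B A" and vf: "cmp C v f = idm C A"
    using cokernel_desc[OF cz idm_hom] hom_obj[OF f] by blast
  have "cmp C (cmp C f v) f = cmp C (idm C B) f" using assoc[OF f v f] vf idr[OF f] idl[OF f] by simp
  then have "cmp C f v = idm C B" using epiD[OF epi comp[OF v f] idm_hom] hom_obj[OF f] by blast
  then show ?thesis unfolding is_iso_def using f v vf by blast
qed

end

section \<open>Full faithfulness in A^[1]_c via test objects\<close>

locale arrow_hom = abel +
  fixes A1 A0 a B1 B0 b f0 f1
  assumes a: "a \<in> hom C A1 A0" and b: "b \<in> hom C B1 B0"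
    and f: "arr_mor C (A1, A0, a) (B1, B0, b) (f0, f1)"
begin

lemma f0: "f0 \<in> hom C A0 B0" and f1: "f1 \<in> hom C A1 B1" and square: "cmp C b f1 = cmp C f0 a"
  using f unfolding arr_mor_def by auto

lemma A0: "A0 \<in> obj C" and A1: "A1 \<in> obj C" and B0: "B0 \<in> obj C" and B1: "B1 \<in> obj C"
  using hom_obj[OF a] hom_obj[OF b] by auto

definition faithful_at where
  "faithful_at P \<longleftrightarrow> (\<forall>d\<in>hom C P A1.
     cmp C a d = zer C P A0 \<longrightarrow> cmp C f1 d = zer C P B1 \<longrightarrow> d = zer C P A1)"

definition full_at where
  "full_at P \<longleftrightarrow> (\<forall>s\<in>hom C P A0. \<forall>t\<in>hom C P B1. cmp C f0 s = cmp C b t \<longrightarrow>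
     (\<exists>r\<in>hom C P A1. cmp C a r = s \<and> cmp C f1 r = t))"

lemma faithful_atD:
  "faithful_at P \<Longrightarrow> d \<in> hom C P A1 \<Longrightarrow> cmp C a d = zer C P A0 \<Longrightarrow> cmp C f1 d = zer C P B1 \<Longrightarrow>
    d = zer C P A1"
  unfolding faithful_at_def by blast

lemma full_atD:
  "full_at P \<Longrightarrow> s \<in> hom C P A0 \<Longrightarrow> t \<in> hom C P B1 \<Longrightarrow> cmp C f0 s = cmp C b t \<Longrightarrow>
    \<exists>r\<in>hom C P A1. cmp C a r = s \<and> cmp C f1 r = t"
  unfolding full_at_def by blast

text \<open>Faithfulness propagates along epimorphisms, so with enough projectives it suffices to
  know it at projective objects.\<close>
lemma faithful_at_everywhere:
  assumes ep: "enough_projectives C" and proj: "\<And>P. projective C P \<Longrightarrow> faithful_at P"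
    and X: "X \<in> obj C"
  shows "faithful_at X"
  unfolding faithful_at_def
proof (intro ballI impI)
  fix d assume d: "d \<in> hom C X A1" and ad: "cmp C a d = zer C X A0" and fd: "cmp C f1 d = zer C X B1"
  obtain P p where P: "projective C P" and p: "is_epi C P X p"
    using ep X unfolding enough_projectives_def by blast
  have p': "p \<in> hom C P X" using epi_hom[OF p] .
  have dp: "cmp C d p \<in> hom C P A1" using comp[OF p' d] .
  have "cmp C a (cmp C d p) = zer C P A0" using assoc[OF p' d a] ad comp_zer_l[OF p' A0] by simp
  moreover have "cmp C f1 (cmp C d p) = zer C P B1" using assoc[OF p' d f1] fd comp_zer_l[OF p' B1] by simp
  ultimately have "cmp C d p = zer C P A1" using faithful_atD[OF proj[OF P] dp] by blast
  then show "d = zer C X A1" using epi_zeroD[OF p d] by blast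
qed

text \<open>For a projective P, the arrow 0 : P \<rightarrow> P is an object of A^[1]_c. Morphisms from it into
  a : A1 \<rightarrow> A0 include the pairs (s, 0), and a 2-arrow (s,0) \<Rightarrow> (s',0) is just a map
  r : P \<rightarrow> A1 with a r = s - s'.\<close>

lemma test_object: "projective C P \<Longrightarrow> arr_obj_c C (P, P, zer C P P)"
  unfolding arr_obj_c_def arr_obj_def projective_def using zer_hom by auto

lemma test_morphism:
  assumes P: "P \<in> obj C" and c: "c \<in> hom C X1 X0" and s: "s \<in> hom C P X0"
  shows "arr_mor C (P, P, zer C P P) (X1, X0, c) (s, zer C P X1)"
  unfolding arr_mor_def using zer_hom P hom_obj[OF c] comp_zer_r[OF c P] comp_zer_r[OF s P] s by auto

lemma test_two_arrow:
  assumes P: "P \<in> obj C" and c: "c \<in> hom C X1 X0"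
  shows "two_arrow C (P, P, zer C P P) (X1, X0, c) (s, zer C P X1) (s', zer C P X1) r \<longleftrightarrow>
    r \<in> hom C P X1 \<and> minus C s s' = cmp C c r"
proof -
  have z: "zer C P X1 \<in> hom C P X1" using zer_hom P hom_obj[OF c] by blast
  have "r \<in> hom C P X1 \<Longrightarrow> cmp C r (zer C P P) = zer C P X1" using comp_zer_r P by blast
  then show ?thesis unfolding two_arrow_def using minus_self[OF z] by auto
qed

lemma test_comp:
  assumes P: "P \<in> obj C" and s: "s \<in> hom C P A0"
  shows "arr_comp C (f0, f1) (s, zer C P A1) = (cmp C f0 s, zer C P B1)"
  unfolding arr_comp_def using comp_zer_r[OF f1 P] by simp

text \<open>Full faithfulness, tested on (s,0) and (0,0), yields fullness at projectives.\<close>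
lemma ff_full_at:
  assumes ff: "fully_faithful_c C (A1, A0, a) (B1, B0, b) (f0, f1)" and P: "projective C P"
  shows "full_at P"
  unfolding full_at_def
proof (intro ballI impI)
  fix s t assume s: "s \<in> hom C P A0" and t: "t \<in> hom C P B1" and e: "cmp C f0 s = cmp C b t"
  have Po: "P \<in> obj C" using P unfolding projective_def by blast
  have z: "zer C P A0 \<in> hom C P A0" using zer_hom Po A0 by blast
  have "two_arrow C (P, P, zer C P P) (B1, B0, b) (cmp C f0 s, zer C P B1) (zer C P B0, zer C P B1) t"
    using test_two_arrow[OF Po b] t e minus_zero[OF comp[OF s f0]] by simp
  then obtain r where r: "two_arrow C (P, P, zer C P P) (A1, A0, a) (s, zer C P A1) (zer C P A0, zer C P A1) r"
      and fr: "whisker_left C (f0, f1) r = t"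
    using ff test_object[OF P] test_morphism[OF Po a s] test_morphism[OF Po a z]
      test_comp[OF Po s] test_comp[OF Po z] comp_zer_r[OF f0 Po]
    unfolding fully_faithful_c_def by metis
  show "\<exists>r\<in>hom C P A1. cmp C a r = s \<and> cmp C f1 r = t"
    using r fr test_two_arrow[OF Po a] minus_zero[OF s] unfolding whisker_left_def by auto
qed

text \<open>Full faithfulness, tested on the two 2-arrows d, 0 : (0,0) \<Rightarrow> (0,0), yields
  faithfulness at projectives.\<close>
lemma ff_faithful_at:
  assumes ff: "fully_faithful_c C (A1, A0, a) (B1, B0, b) (f0, f1)" and P: "projective C P"
  shows "faithful_at P"
  unfolding faithful_at_def
proof (intro ballI impI)
  fix d assume d: "d \<in> hom C P A1" and ad: "cmp C a d = zer C P A0" and fd: "cmp C f1 d = zer C P B1"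
  have Po: "P \<in> obj C" using P unfolding projective_def by blast
  have z0: "zer C P A0 \<in> hom C P A0" and z1: "zer C P A1 \<in> hom C P A1" using zer_hom Po A0 A1 by auto
  have two_d: "two_arrow C (P, P, zer C P P) (A1, A0, a) (zer C P A0, zer C P A1) (zer C P A0, zer C P A1) d"
    using test_two_arrow[OF Po a] d ad minus_self[OF z0] by simp
  have two_0: "two_arrow C (P, P, zer C P P) (A1, A0, a) (zer C P A0, zer C P A1) (zer C P A0, zer C P A1) (zer C P A1)"
    using test_two_arrow[OF Po a] z1 minus_self[OF z0] comp_zer_r[OF a Po] by simp
  have "whisker_left C (f0, f1) d = whisker_left C (f0, f1) (zer C P A1)"
    unfolding whisker_left_def using fd comp_zer_r[OF f1 Po] by simp
  then show "d = zer C P A1"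
    using ff test_object[OF P] test_morphism[OF Po a z0] two_d two_0 unfolding fully_faithful_c_def by metis
qed

text \<open>Conversely, fullness at X0 and faithfulness at X1 make f \<circ> - full on Hom(x, a) for
  x : X1 \<rightarrow> X0: the difference of the 0-components lifts along a by fullness, and faithfulness
  at X1 checks that the lift is compatible with the 1-components.\<close>
lemma two_arrow_lift:
  assumes full: "full_at X0" and faithful: "faithful_at X1" and x: "x \<in> hom C X1 X0"
    and e: "arr_mor C (X1, X0, x) (A1, A0, a) (e0, e1)"
    and e': "arr_mor C (X1, X0, x) (A1, A0, a) (e0', e1')"
    and t: "two_arrow C (X1, X0, x) (B1, B0, b)
              (arr_comp C (f0, f1) (e0, e1)) (arr_comp C (f0, f1) (e0', e1')) t"
  shows "\<exists>r. two_arrow C (X1, X0, x) (A1, A0, a) (e0, e1) (e0', e1') r \<and> whisker_left C (f0, f1) r = t"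
proof -
  have e0: "e0 \<in> hom C X0 A0" and e1: "e1 \<in> hom C X1 A1" and ae: "cmp C a e1 = cmp C e0 x"
    using e unfolding arr_mor_def by auto
  have e0': "e0' \<in> hom C X0 A0" and e1': "e1' \<in> hom C X1 A1" and ae': "cmp C a e1' = cmp C e0' x"
    using e' unfolding arr_mor_def by auto
  have t_hom: "t \<in> hom C X0 B1"
    and ft1: "minus C (cmp C f1 e1) (cmp C f1 e1') = cmp C t x"
    and ft0: "minus C (cmp C f0 e0) (cmp C f0 e0') = cmp C b t"
    using t unfolding two_arrow_def arr_comp_def by auto
  define d0 where "d0 = minus C e0 e0'"
  define d1 where "d1 = minus C e1 e1'"
  have d0: "d0 \<in> hom C X0 A0" and d1: "d1 \<in> hom C X1 A1"
    unfolding d0_def d1_def using minus_hom e0 e0' e1 e1' by auto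
  have ad1: "cmp C a d1 = cmp C d0 x"
    unfolding d0_def d1_def using comp_minus_r[OF e1 e1' a] comp_minus_l[OF x e0 e0'] ae ae' by simp
  have fd1: "cmp C f1 d1 = cmp C t x" unfolding d1_def using comp_minus_r[OF e1 e1' f1] ft1 by simp
  have "cmp C f0 d0 = cmp C b t" unfolding d0_def using comp_minus_r[OF e0 e0' f0] ft0 by simp
  then obtain r where r: "r \<in> hom C X0 A1" and ar: "cmp C a r = d0" and fr: "cmp C f1 r = t"
    using full_atD[OF full d0 t_hom] by blast
  have rx: "cmp C r x \<in> hom C X1 A1" using comp[OF x r] .
  have "cmp C a (minus C d1 (cmp C r x)) = zer C X1 A0"
    using comp_minus_r[OF d1 rx a] ad1 assoc[OF x r a] ar minus_self comp[OF x d0] by simp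
  moreover have "cmp C f1 (minus C d1 (cmp C r x)) = zer C X1 B1"
    using comp_minus_r[OF d1 rx f1] fd1 assoc[OF x r f1] fr minus_self comp[OF x t_hom] by simp
  ultimately have "minus C d1 (cmp C r x) = zer C X1 A1"
    using faithful_atD[OF faithful minus_hom[OF d1 rx]] by blast
  then have "d1 = cmp C r x" using minus_eq_zero[OF d1 rx] by blast
  then have "two_arrow C (X1, X0, x) (A1, A0, a) (e0, e1) (e0', e1') r"
    unfolding two_arrow_def using r ar d0_def d1_def by simp
  then show ?thesis using fr unfolding whisker_left_def by auto
qed

text \<open>Faithfulness at X0 makes f \<circ> - faithful on Hom(x, a): two 2-arrows with the same
  whiskering differ by a map killed by both a and f1.\<close>
lemma two_arrow_unique:
  assumes faithful: "faithful_at X0"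
    and r: "two_arrow C (X1, X0, x) (A1, A0, a) e e' r"
    and r': "two_arrow C (X1, X0, x) (A1, A0, a) e e' r'"
    and w: "whisker_left C (f0, f1) r = whisker_left C (f0, f1) r'"
  shows "r = r'"
proof -
  have rh: "r \<in> hom C X0 A1" and ar: "minus C (fst e) (fst e') = cmp C a r"
    using r unfolding two_arrow_def by auto
  have rh': "r' \<in> hom C X0 A1" and ar': "minus C (fst e) (fst e') = cmp C a r'"
    using r' unfolding two_arrow_def by auto
  have "cmp C a (minus C r r') = zer C X0 A0"
    using comp_minus_r[OF rh rh' a] ar ar' minus_self comp[OF rh a] by simp
  moreover have "cmp C f1 (minus C r r') = zer C X0 B1"
    using comp_minus_r[OF rh rh' f1] w minus_self comp[OF rh' f1] unfolding whisker_left_def by simp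
  ultimately have "minus C r r' = zer C X0 A1"
    using faithful_atD[OF faithful minus_hom[OF rh rh']] by blast
  then show "r = r'" using minus_eq_zero[OF rh rh'] by blast
qed

theorem fully_faithful_c_iff_tests:
  assumes ep: "enough_projectives C"
  shows "fully_faithful_c C (A1, A0, a) (B1, B0, b) (f0, f1) \<longleftrightarrow>
    (\<forall>P. projective C P \<longrightarrow> full_at P) \<and> (\<forall>X\<in>obj C. faithful_at X)"
proof
  assume ff: "fully_faithful_c C (A1, A0, a) (B1, B0, b) (f0, f1)"
  show "(\<forall>P. projective C P \<longrightarrow> full_at P) \<and> (\<forall>X\<in>obj C. faithful_at X)"
    using ff_full_at[OF ff] faithful_at_everywhere[OF ep ff_faithful_at[OF ff]] by blast
next
  assume tests: "(\<forall>P. projective C P \<longrightarrow> full_at P) \<and> (\<forall>X\<in>obj C. faithful_at X)"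
  show "fully_faithful_c C (A1, A0, a) (B1, B0, b) (f0, f1)"
    unfolding fully_faithful_c_def
  proof (intro allI impI, rule conjI)
    fix x e e' assume x: "arr_obj_c C x"
      and e: "arr_mor C x (A1, A0, a) e" and e': "arr_mor C x (A1, A0, a) e'"
    obtain X1 X0 xm where xd: "x = (X1, X0, xm)" by (cases x) auto
    obtain e0 e1 e0' e1' where ed: "e = (e0, e1)" "e' = (e0', e1')" by (cases e, cases e') auto
    have xm: "xm \<in> hom C X1 X0" and X0: "projective C X0"
      using x unfolding xd arr_obj_c_def arr_obj_def by auto
    have full: "full_at X0" and faithful: "faithful_at X0" "faithful_at X1"
      using tests X0 hom_obj[OF xm] by auto
    show "\<forall>t. two_arrow C x (B1, B0, b) (arr_comp C (f0, f1) e) (arr_comp C (f0, f1) e') t \<longrightarrow>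
        (\<exists>r. two_arrow C x (A1, A0, a) e e' r \<and> whisker_left C (f0, f1) r = t)"
      using two_arrow_lift[OF full faithful(2) xm] e e' unfolding xd ed by blast
    show "\<forall>r r'. two_arrow C x (A1, A0, a) e e' r \<longrightarrow> two_arrow C x (A1, A0, a) e e' r' \<longrightarrow>
        whisker_left C (f0, f1) r = whisker_left C (f0, f1) r' \<longrightarrow> r = r'"
      using two_arrow_unique[OF faithful(1)] unfolding xd by blast
  qed
qed

end

section \<open>The induced maps on kernels and cokernels\<close>

locale induced_maps = arrow_hom +
  fixes K k K' k' g Q q Q' q' h
  assumes ker_a: "is_kernel C A1 A0 a K k" and ker_b: "is_kernel C B1 B0 b K' k'"
    and g: "g \<in> hom C K K'" and kg: "cmp C k' g = cmp C f1 k"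
    and cok_a: "is_cokernel C A1 A0 a Q q" and cok_b: "is_cokernel C B1 B0 b Q' q'"
    and h: "h \<in> hom C Q Q'" and hq: "cmp C h q = cmp C q' f0"
begin

lemma k: "k \<in> hom C K A1" and ak: "cmp C a k = zer C K A0"
  using kernelD[OF ker_a] by auto
lemma k': "k' \<in> hom C K' B1" and bk': "cmp C b k' = zer C K' B0"
  using kernelD[OF ker_b] by auto
lemma q: "q \<in> hom C A0 Q" and qa: "cmp C q a = zer C A1 Q"
  using cokernelD[OF cok_a] by auto
lemma q': "q' \<in> hom C B0 Q'"
  using cokernelD[OF cok_b] by auto

text \<open>A map killed by a is a map into K, on which f1 acts as g: so faithfulness everywhere
  is the same as g being mono.\<close>
lemma faithful_iff_mono: "(\<forall>X\<in>obj C. faithful_at X) \<longleftrightarrow> is_mono C K K' g"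
proof
  assume faithful: "\<forall>X\<in>obj C. faithful_at X"
  show "is_mono C K K' g"
  proof (rule mono_zeroI[OF g])
    fix X u assume X: "X \<in> obj C" and u: "u \<in> hom C X K" and gu: "cmp C g u = zer C X K'"
    have ku: "cmp C k u \<in> hom C X A1" using comp[OF u k] .
    have "cmp C a (cmp C k u) = zer C X A0" using assoc[OF u k a] ak comp_zer_l[OF u A0] by simp
    moreover have "cmp C f1 (cmp C k u) = zer C X B1"
      using assoc[OF u k f1] kg assoc[OF u g k'] gu comp_zer_r[OF k' X] by simp
    ultimately have "cmp C k u = zer C X A1" using faithful_atD faithful X ku by blast
    then show "u = zer C X K" using mono_zeroD[OF kernel_mono[OF ker_a] u] by blast
  qed
next
  assume g_mono: "is_mono C K K' g"
  show "\<forall>X\<in>obj C. faithful_at X"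
    unfolding faithful_at_def
  proof (intro ballI impI)
    fix X d assume X: "X \<in> obj C" and d: "d \<in> hom C X A1"
      and ad: "cmp C a d = zer C X A0" and fd: "cmp C f1 d = zer C X B1"
    obtain u where u: "u \<in> hom C X K" and ku: "cmp C k u = d" using kernel_lift[OF ker_a d ad] by blast
    have "cmp C k' (cmp C g u) = zer C X B1" using assoc[OF u g k'] kg assoc[OF u k f1] ku fd by simp
    then have "cmp C g u = zer C X K'" using mono_zeroD[OF kernel_mono[OF ker_b] comp[OF u g]] by blast
    then have "u = zer C X K" using mono_zeroD[OF g_mono u] by blast
    then show "d = zer C X A1" using ku comp_zer_r[OF k X] by simp
  qed
qed

text \<open>Fullness at a projective cover p : P \<rightarrow> K' applied to (0, k' p) lifts p through g.\<close>
lemma full_epi: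
  assumes ep: "enough_projectives C" and full: "\<And>P. projective C P \<Longrightarrow> full_at P"
  shows "is_epi C K K' g"
proof (rule epi_zeroI[OF g])
  fix Y u assume Y: "Y \<in> obj C" and u: "u \<in> hom C K' Y" and ug: "cmp C u g = zer C K Y"
  obtain P p where P: "projective C P" and p: "is_epi C P K' p"
    using ep hom_obj[OF g] unfolding enough_projectives_def by blast
  have p': "p \<in> hom C P K'" using epi_hom[OF p] .
  have Po: "P \<in> obj C" using hom_obj[OF p'] by blast
  have z: "zer C P A0 \<in> hom C P A0" using zer_hom Po A0 by blast
  have "cmp C f0 (zer C P A0) = cmp C b (cmp C k' p)"
    using comp_zer_r[OF f0 Po] assoc[OF p' k' b] bk' comp_zer_l[OF p' B0] by simp
  then obtain r where r: "r \<in> hom C P A1" and ar: "cmp C a r = zer C P A0" and fr: "cmp C f1 r = cmp C k' p"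
    using full_atD[OF full[OF P] z comp[OF p' k']] by blast
  obtain w where w: "w \<in> hom C P K" and kw: "cmp C k w = r" using kernel_lift[OF ker_a r ar] by blast
  have "cmp C k' (cmp C g w) = cmp C k' p" using assoc[OF w g k'] kg assoc[OF w k f1] kw fr by simp
  then have gw: "cmp C g w = p" using monoD[OF kernel_mono[OF ker_b] comp[OF w g] p'] by blast
  have "cmp C u p = zer C P Y" using gw[symmetric] assoc[OF w g u] ug comp_zer_l[OF w Y] by simp
  then show "u = zer C K' Y" using epi_zeroD[OF p u] by blast
qed

text \<open>A map into Q killed by h lifts, from a projective cover, to s : P \<rightarrow> A0 with f0 s in the
  image of b; fullness makes s factor through a, so the map was zero.\<close>
lemma full_mono:
  assumes ep: "enough_projectives C" and full: "\<And>P. projective C P \<Longrightarrow> full_at P"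
  shows "is_mono C Q Q' h"
proof (rule mono_zeroI[OF h])
  fix X u assume X: "X \<in> obj C" and u: "u \<in> hom C X Q" and hu: "cmp C h u = zer C X Q'"
  obtain P p where P: "projective C P" and p: "is_epi C P X p"
    using ep X unfolding enough_projectives_def by blast
  have p': "p \<in> hom C P X" using epi_hom[OF p] .
  have up: "cmp C u p \<in> hom C P Q" using comp[OF p' u] .
  obtain s where s: "s \<in> hom C P A0" and qs: "cmp C q s = cmp C u p"
    using P cokernel_epi[OF cok_a] up unfolding projective_def by blast
  have "cmp C q' (cmp C f0 s) = cmp C h (cmp C u p)"
    using assoc[OF s f0 q'] hq[symmetric] assoc[OF s q h] qs by simp
  also have "\<dots> = zer C P Q'" using assoc[OF p' u h] hu comp_zer_l[OF p'] hom_obj[OF h] by simp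
  finally obtain t where t: "t \<in> hom C P B1" and bt: "cmp C b t = cmp C f0 s"
    using image_lift[OF cok_b P comp[OF s f0]] by blast
  obtain r where r: "r \<in> hom C P A1" and ar: "cmp C a r = s"
    using full_atD[OF full[OF P] s t] bt by metis
  have "cmp C u p = zer C P Q" using qs[symmetric] ar assoc[OF r a q] qa comp_zer_l[OF r] hom_obj[OF q] by simp
  then show "u = zer C X Q" using epi_zeroD[OF p u] by blast
qed

text \<open>Conversely, if g is iso and h mono: given f0 s = b t, the map s is killed by q (test with
  the mono h), hence s = a r0 since P is projective; the error t - f1 r0 is killed by b, so
  it lies in K' = g(K) and can be absorbed into r0.\<close>
lemma iso_mono_full:
  assumes g_iso: "is_iso C K K' g" and h_mono: "is_mono C Q Q' h" and P: "projective C P"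
  shows "full_at P"
  unfolding full_at_def
proof (intro ballI impI)
  fix s t assume s: "s \<in> hom C P A0" and t: "t \<in> hom C P B1" and e: "cmp C f0 s = cmp C b t"
  obtain g' where g': "g' \<in> hom C K' K" and gg': "cmp C g g' = idm C K'"
    using g_iso unfolding is_iso_def by blast
  have "cmp C h (cmp C q s) = cmp C q' (cmp C b t)"
    using assoc[OF s q h] hq assoc[OF s f0 q'] e by simp
  also have "\<dots> = zer C P Q'"
    using assoc[OF t b q'] cokernelD(3)[OF cok_b] comp_zer_l[OF t] hom_obj[OF q'] by simp
  finally have "cmp C q s = zer C P Q" using mono_zeroD[OF h_mono comp[OF s q]] by blast
  then obtain r0 where r0: "r0 \<in> hom C P A1" and ar0: "cmp C a r0 = s"
    using image_lift[OF cok_a P s] by blast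
  have fr0: "cmp C f1 r0 \<in> hom C P B1" using comp[OF r0 f1] .
  define err where "err = minus C t (cmp C f1 r0)"
  have err: "err \<in> hom C P B1" unfolding err_def using minus_hom t fr0 by blast
  have "cmp C b (cmp C f1 r0) = cmp C b t" using assoc[OF r0 f1 b] square assoc[OF r0 a f0] ar0 e by simp
  then have "cmp C b err = zer C P B0" unfolding err_def using comp_minus_r[OF t fr0 b] minus_self comp[OF t b] by simp
  then obtain w where w: "w \<in> hom C P K'" and k'w: "cmp C k' w = err" using kernel_lift[OF ker_b err] by blast
  define r where "r = plus C r0 (cmp C k (cmp C g' w))"
  have kgw: "cmp C k (cmp C g' w) \<in> hom C P A1" using comp[OF comp[OF w g'] k] .
  have f1_kgw: "cmp C f1 (cmp C k (cmp C g' w)) = err"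
    using assoc[OF comp[OF w g'] k f1] kg assoc[OF comp[OF w g'] g k'] assoc[OF w g' g] gg' idl[OF w] k'w
    by simp
  have "cmp C a r = s"
    unfolding r_def using distr[OF r0 kgw a] ar0 assoc[OF comp[OF w g'] k a] ak
      comp_zer_l[OF comp[OF w g'] A0] add_zero[OF s] by simp
  moreover have "cmp C f1 r = t"
    unfolding r_def using distr[OF r0 kgw f1] f1_kgw add_comm[OF fr0 err] plus_minus[OF t fr0]
    unfolding err_def by simp
  moreover have "r \<in> hom C P A1" unfolding r_def using plus_hom r0 kgw by blast
  ultimately show "\<exists>r\<in>hom C P A1. cmp C a r = s \<and> cmp C f1 r = t" by blast
qed

end

theorem lemma3p2:
  fixes C :: "('o, 'm) cat_data"
  assumes "abelian C" and "enough_projectives C"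
    and "arr_obj_c C (A1, A0, a)" and "arr_obj_c C (B1, B0, b)"
    and "arr_mor C (A1, A0, a) (B1, B0, b) (f0, f1)"
    and "is_kernel C A1 A0 a K k" and "is_kernel C B1 B0 b K' k'"
    and "g \<in> hom C K K'" and "cmp C k' g = cmp C f1 k"
    and "is_cokernel C A1 A0 a Q q" and "is_cokernel C B1 B0 b Q' q'"
    and "h \<in> hom C Q Q'" and "cmp C h q = cmp C q' f0"
  shows "fully_faithful_c C (A1, A0, a) (B1, B0, b) (f0, f1) \<longleftrightarrow>
           is_iso C K K' g \<and> is_mono C Q Q' h"
proof -
  interpret induced_maps C A1 A0 a B1 B0 b f0 f1 K k K' k' g Q q Q' q' h
    using assms unfolding induced_maps_def induced_maps_axioms_def arrow_hom_def arrow_hom_axioms_def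
      abel_def abel_axioms_def preadd_def arr_obj_c_def arr_obj_def
    by (simp add: abelian_def)
  have "fully_faithful_c C (A1, A0, a) (B1, B0, b) (f0, f1) \<longleftrightarrow>
      (\<forall>P. projective C P \<longrightarrow> full_at P) \<and> is_mono C K K' g"
    using fully_faithful_c_iff_tests[OF assms(2)] faithful_iff_mono by simp
  also have "\<dots> \<longleftrightarrow> is_iso C K K' g \<and> is_mono C Q Q' h"
    using full_epi[OF assms(2)] full_mono[OF assms(2)] iso_mono_full mono_epi_iso iso_mono by blast
  finally show ?thesis .
qed

end
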